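(* Let $\Gamma=(\mathcal{V},\mathcal{H})$ be an $(l,r)$-hyperflower on $N$ vertices with peripheral vertices $v_1,\ldots,v_l$. Let $\hat{\Gamma}=(\hat{\mathcal{V}},\hat{\mathcal{H}})$ be the $(1,r)$-hyperflower defined by $\hat{\mathcal{V}}:=\mathcal{V}\setminus\{v_2,\ldots,v_l\}$ and $\hat{\mathcal{H}}:=\{h\in\mathcal{H}: v_2,\ldots,v_l\notin h\}$. Then the spectrum of $\Gamma$ is given by the $N-l+1$ eigenvalues of $\hat{\Gamma}$ (counted with multiplicity) together with the eigenvalue $1$ with multiplicity at least $l-1$; that is, the eigenvalues of $\Gamma$ counted with multiplicity are those of $\hat\Gamma$ together with $l-1$ further eigenvalues equal to $1$.
   Context: A hypergraph $\Gamma=(\mathcal{V},\mathcal{H})$ has a finite vertex set $\mathcal{V}$ and a set $\mathcal{H}$ of nonempty subsets of $\mathcal{V}$ (hyperedges); standing assumption: no isolated vertices. $\deg(v)$ is the number of hyperedges containing $v$, $D$ the diagonal degree matrix, $A$ the matrix with $A_{ii}=0$ and $A_{ij}=-\#\{h\in\mathcal{H}: v_i,v_j\in h\}$ for $i\ne j$, and the spectrum of $\Gamma$ is the spectrum of its (signless) normalized Laplacian $L=\mathrm{Id}-D^{-1}A$. An $(l,r)$-hyperflower is a hypergraph whose vertex set is $\mathcal{V}=U\sqcup\mathcal{W}$ with $U=\{v_1,\ldots,v_l\}$ (peripheral vertices) and such that there are $r$ pairwise disjoint nonempty sets $h_1,\ldots,h_r\subseteq\mathcal{W}$ with $\mathcal{H}=\{h_i\cup\{v_j\}: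 i=1,\ldots,r,\ j=1,\ldots,l\}$ (by the no-isolated-vertex assumption, $\mathcal{W}=h_1\cup\cdots\cup h_r$). *)

theory Defs
  imports "Jordan_Normal_Form.Char_Poly"
begin

definition hypergraph :: "'a set \<Rightarrow> 'a set set \<Rightarrow> bool" where
  "hypergraph V H \<longleftrightarrow> finite V \<and> (\<forall>h\<in>H. h \<noteq> {} \<and> h \<subseteq> V) \<and> (\<forall>x\<in>V. \<exists>h\<in>H. x \<in> h)"

definition hdeg :: "'a set set \<Rightarrow> 'a \<Rightarrow> nat" where
  "hdeg H x = card {h\<in>H. x \<in> h}"

definition vlist :: "'a::linorder set \<Rightarrow> 'a list" where
  "vlist V = sorted_list_of_set V"

definition adj_mat :: "'a::linorder set \<Rightarrow> 'a set set \<Rightarrow> real mat" where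
  "adj_mat V H = mat (card V) (card V) (\<lambda>(i,j).
      if i = j then 0 else - real (card {h\<in>H. vlist V ! i \<in> h \<and> vlist V ! j \<in> h}))"

definition deg_mat :: "'a::linorder set \<Rightarrow> 'a set set \<Rightarrow> real mat" where
  "deg_mat V H = mat (card V) (card V) (\<lambda>(i,j). if i = j then real (hdeg H (vlist V ! i)) else 0)"

text \<open>Inverse of the (diagonal, invertible since no isolated vertices) degree matrix.\<close>
definition deg_inv_mat :: "'a::linorder set \<Rightarrow> 'a set set \<Rightarrow> real mat" where
  "deg_inv_mat V H = mat (card V) (card V) (\<lambda>(i,j). if i = j then 1 / real (hdeg H (vlist V ! i)) else 0)"

definition norm_laplacian :: "'a::linorder set \<Rightarrow> 'a set set \<Rightarrow> real mat" where
  "norm_laplacian V H = 1\<^sub>m (card V) - deg_inv_mat V H * adj_mat V H"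

definition hspectrum :: "'a::linorder set \<Rightarrow> 'a set set \<Rightarrow> complex multiset" where
  "hspectrum V H = proots (char_poly (map_mat complex_of_real (norm_laplacian V H)))"

text \<open>(l,r)-hyperflower with peripheral vertices v 1..v l and petals hs 1..hs r.\<close>
definition hyperflower :: "'a set \<Rightarrow> 'a set set \<Rightarrow> nat \<Rightarrow> nat \<Rightarrow> (nat \<Rightarrow> 'a) \<Rightarrow> (nat \<Rightarrow> 'a set) \<Rightarrow> bool" where
  "hyperflower V H l r v hs \<longleftrightarrow>
     hypergraph V H \<and> inj_on v {1..l} \<and>
     (\<forall>i\<in>{1..r}. hs i \<noteq> {} \<and> hs i \<inter> v ` {1..l} = {}) \<and>
     (\<forall>i\<in>{1..r}. \<forall>k\<in>{1..r}. i \<noteq> k \<longrightarrow> hs i \<inter> hs k = {}) \<and>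
     V = v ` {1..l} \<union> (\<Union>i\<in>{1..r}. hs i) \<and>
     H = {hs i \<union> {v j} | i j. i \<in> {1..r} \<and> j \<in> {1..l}}"

end

(* In L the peripheral vertices v_1, ..., v_l are twins: among themselves L is the identity, and
   their rows agree everywhere else.  Subtracting the row of v_1 from the rows of v_2, ..., v_l and
   adding the columns of v_2, ..., v_l to the column of v_1 is a similarity which makes L block
   triangular, with an identity block of size l - 1.  The other diagonal block is L on the
   remaining vertices with all peripheral columns merged into the column of v_1.  Every vertex has
   peripheral row sum 1 in both flowers, so this block is exactly the Laplacian of the
   (1,r)-hyperflower. *)

theory Submission
  imports Defs
begin

section \<open>Matrices indexed by lists of vertices\<close>

definition kernel_mat :: "'a list \<Rightarrow> 'a list \<Rightarrow> ('a \<Rightarrow> 'a \<Rightarrow> 'b) \<Rightarrow> 'b mat" where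
  "kernel_mat xs ys g = mat (length xs) (length ys) (\<lambda>(i, j). g (xs ! i) (ys ! j))"

lemma kernel_mat_carrier [simp]: "kernel_mat xs ys g \<in> carrier_mat (length xs) (length ys)"
  and dim_row_kernel_mat [simp]: "dim_row (kernel_mat xs ys g) = length xs"
  and dim_col_kernel_mat [simp]: "dim_col (kernel_mat xs ys g) = length ys"
  by (simp_all add: kernel_mat_def)

lemma index_kernel_mat [simp]:
  "i < length xs \<Longrightarrow> j < length ys \<Longrightarrow> kernel_mat xs ys g $$ (i, j) = g (xs ! i) (ys ! j)"
  by (simp add: kernel_mat_def)

lemma kernel_mat_cong:
  assumes "\<And>x y. x \<in> set xs \<Longrightarrow> y \<in> set ys \<Longrightarrow> f x y = g x y"
  shows "kernel_mat xs ys f = kernel_mat xs ys g"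
  using assms by (intro eq_matI) auto

lemma kernel_mat_zero: "kernel_mat xs ys (\<lambda>_ _. 0) = 0\<^sub>m (length xs) (length ys)"
  by (intro eq_matI) auto

lemma kernel_mat_delta:
  "distinct xs \<Longrightarrow> kernel_mat xs xs (\<lambda>x y. if x = y then 1 else 0) = 1\<^sub>m (length xs)"
  by (intro eq_matI) (auto simp: nth_eq_iff_index_eq)

lemma kernel_mat_add:
  "kernel_mat xs ys f + kernel_mat xs ys g = kernel_mat xs ys (\<lambda>x y. f x y + g x y)"
  by (intro eq_matI) auto

lemma kernel_mat_mult:
  "kernel_mat xs ys f * kernel_mat ys zs g = kernel_mat xs zs (\<lambda>x z. \<Sum>y\<leftarrow>ys. f x y * g y z)"
  by (rule eq_matI) (simp_all add: scalar_prod_def sum_list_sum_nth)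

lemma kernel_mat_append:
  "kernel_mat (xs @ xs') (ys @ ys') g =
     four_block_mat (kernel_mat xs ys g) (kernel_mat xs ys' g) (kernel_mat xs' ys g) (kernel_mat xs' ys' g)"
  by (intro eq_matI) (auto simp: nth_append)

lemma det_kernel_mat_perm:
  assumes "distinct xs" "distinct ys" "set xs = set ys"
  shows "det (kernel_mat xs xs g) = det (kernel_mat ys ys g)"
proof -
  obtain p where p: "p permutes {..<length ys}" and xs: "permute_list p ys = xs"
    using mset_eq_permutation assms set_eq_iff_mset_eq_distinct by metis
  define n where "n = length ys"
  define B where "B = kernel_mat ys ys g"
  define C where "C = mat n n (\<lambda>(i, j). B $$ (p i, j))"
  define E where "E = mat n n (\<lambda>(i, j). transpose_mat C $$ (p i, j))"
  have p': "p permutes {0..<n}" using p by (simp add: n_def atLeast0LessThan)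
  have B: "B \<in> carrier_mat n n" and C: "C \<in> carrier_mat n n" and E: "E \<in> carrier_mat n n"
    by (simp_all add: B_def C_def E_def n_def)
  have len: "length xs = n" by (simp add: n_def flip: xs)
  have p_lt: "p i < n" if "i < n" for i using permutes_in_image[OF p] that by (simp add: n_def)
  have xs_nth: "xs ! i = ys ! p i" if "i < n" for i
    using permute_list_nth[OF p, of i] that xs by (simp add: n_def)
  have "kernel_mat xs xs g = transpose_mat E"
    by (rule eq_matI) (simp_all add: len p_lt xs_nth B_def C_def E_def flip: n_def)
  then have "det (kernel_mat xs xs g) = det E" using E by (simp add: det_transpose)
  also have "\<dots> = signof p * det (transpose_mat C)"
    unfolding E_def using C p' by (simp add: det_permute_rows)
  also have "\<dots> = signof p * (signof p * det B)"
    using det_transpose[OF C] det_permute_rows[OF B p'] by (simp add: C_def)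
  also have "\<dots> = det B"
    by (simp flip: mult.assoc of_int_mult)
  finally show ?thesis by (simp add: B_def)
qed

lemma char_poly_kernel_mat_perm:
  assumes "distinct xs" "distinct ys" "set xs = set ys"
  shows "char_poly (kernel_mat xs xs g) = char_poly (kernel_mat ys ys g)"
proof -
  have "char_poly_matrix (kernel_mat zs zs g) =
      kernel_mat zs zs (\<lambda>x y. (if x = y then [:0, 1:] else 0) + [:- g x y:])" if "distinct zs" for zs
    using that by (intro eq_matI) (auto simp: char_poly_matrix_def nth_eq_iff_index_eq)
  then show ?thesis
    using assms det_kernel_mat_perm[OF assms] by (simp add: char_poly_def)
qed

lemma char_poly_four_block_upper_right_zero:
  fixes A :: "'a::idom mat"
  assumes A: "A \<in> carrier_mat n n" and C: "C \<in> carrier_mat m n" and D: "D \<in> carrier_mat m m"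
  shows "char_poly (four_block_mat A (0\<^sub>m n m) C D) = char_poly A * char_poly D"
proof -
  have "char_poly_matrix (four_block_mat A (0\<^sub>m n m) C D) =
      four_block_mat (char_poly_matrix A) (0\<^sub>m n m) (map_mat (\<lambda>a. [:- a:]) C) (char_poly_matrix D)"
    using A C D by (intro eq_matI) (auto simp: char_poly_matrix_def)
  then show ?thesis
    using A C D by (simp add: char_poly_def det_four_block_mat_upper_right_zero[OF _ refl])
qed


lemma char_poly_one_mat: "char_poly (1\<^sub>m k :: 'a::idom mat) = [:-1, 1:] ^ k"
proof -
  have "diag_mat (1\<^sub>m k :: 'a mat) = replicate k 1"
    by (simp add: diag_mat_def list_eq_iff_nth_eq)
  then show ?thesis
    by (simp add: char_poly_upper_triangular[of _ k] upper_triangular_def)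
qed

text \<open>Conjugating by the shear with blocks \<open>1, N, 0, 1\<close> clears the upper right block.\<close>
lemma char_poly_four_block_one_mat:
  fixes T :: "'a::idom mat"
  assumes T: "T \<in> carrier_mat k m" and S: "S \<in> carrier_mat m k" and D: "D \<in> carrier_mat m m"
    and N: "N \<in> carrier_mat k m"
    and NS: "N * S = 0\<^sub>m k k" and ND: "N * D = N + T"
  shows "char_poly (four_block_mat (1\<^sub>m k) T S D) = [:-1, 1:] ^ k * char_poly (D + S * N)"
proof -
  define M where "M = four_block_mat (1\<^sub>m k) T S D"
  define Q where "Q = four_block_mat (1\<^sub>m k) N (0\<^sub>m m k) (1\<^sub>m m)"
  define Q' where "Q' = four_block_mat (1\<^sub>m k) (- N) (0\<^sub>m m k) (1\<^sub>m m)"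
  define B where "B = four_block_mat (1\<^sub>m k) (0\<^sub>m k m) S (D + S * N)"
  have SN: "S * N \<in> carrier_mat m m" and DSN: "D + S * N \<in> carrier_mat m m"
    using S N D by simp_all
  have carrier: "M \<in> carrier_mat (k + m) (k + m)" "Q \<in> carrier_mat (k + m) (k + m)"
    "Q' \<in> carrier_mat (k + m) (k + m)" "B \<in> carrier_mat (k + m) (k + m)"
    using D DSN by (simp_all add: M_def Q_def Q'_def B_def)
  have "N * (D + S * N) = N * D + N * S * N"
    using N S D by (simp add: mult_add_distrib_mat)
  then have ND': "N * (D + S * N) = N + T"
    using N T by (simp add: NS ND)
  have neg_N: "N + - N = 0\<^sub>m k m" "- 0\<^sub>m m m = (0\<^sub>m m m :: 'a mat)"
    using N by auto
  have QQ': "Q * Q' = 1\<^sub>m (k + m)" and Q'Q: "Q' * Q = 1\<^sub>m (k + m)"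
    unfolding Q_def Q'_def using N
    by (simp_all add: neg_N mult_four_block_mat[OF one_carrier_mat _ zero_carrier_mat
          one_carrier_mat one_carrier_mat _ zero_carrier_mat one_carrier_mat])
  have "M * Q = four_block_mat (1\<^sub>m k) (N + T) S (S * N + D)"
    unfolding M_def Q_def
    by (subst mult_four_block_mat[OF one_carrier_mat T S D one_carrier_mat N zero_carrier_mat
          one_carrier_mat]) (use T S D N in simp)
  also have "\<dots> = Q * B"
    unfolding Q_def B_def
    by (subst mult_four_block_mat[OF one_carrier_mat N zero_carrier_mat one_carrier_mat
          one_carrier_mat zero_carrier_mat S DSN])
      (use T S D N in \<open>simp add: NS ND' comm_add_mat[OF SN D]\<close>)
  finally have MQ: "M * Q = Q * B" .
  have "M = M * (Q * Q')"
    by (simp only: QQ' right_mult_one_mat[OF carrier(1)])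
  also have "\<dots> = Q * B * Q'"
    by (simp only: MQ flip: assoc_mult_mat[OF carrier(1-3)])
  finally have "similar_mat M B"
    unfolding similar_mat_def similar_mat_wit_def Let_def
    using carrier QQ' Q'Q by (intro exI[of _ Q] exI[of _ Q']) simp
  then have "char_poly M = char_poly B"
    by (rule char_poly_similar)
  also have "\<dots> = [:-1, 1:] ^ k * char_poly (D + S * N)"
    unfolding B_def char_poly_four_block_upper_right_zero[OF one_carrier_mat S DSN] char_poly_one_mat ..
  finally show ?thesis
    by (simp only: M_def)
qed

lemma sum_list_delta_mult:
  fixes f :: "'a \<Rightarrow> 'b::semiring_1"
  assumes "distinct xs" "x \<in> set xs"
  shows "(\<Sum>y\<leftarrow>xs. (if x = y then c else 0) * f y) = c * f x"
proof -
  have "(\<lambda>y. (if x = y then c else 0) * f y) = (\<lambda>y. if x = y then c * f x else 0)"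
    by auto
  then show ?thesis
    using assms by (simp add: sum_list_distinct_conv_sum_set)
qed

lemma char_poly_kernel_mat_twins:
  fixes g g' :: "'a \<Rightarrow> 'a \<Rightarrow> 'b::idom"
  assumes distinct: "distinct (us @ z # zs)"
    and twin_block: "\<And>x y. x \<in> insert z (set us) \<Longrightarrow> y \<in> insert z (set us) \<Longrightarrow>
      g x y = (if x = y then 1 else 0)"
    and twin_rows: "\<And>u y. u \<in> set us \<Longrightarrow> y \<in> set zs \<Longrightarrow> g u y = g z y"
    and merged: "\<And>x y. x \<in> set (z # zs) \<Longrightarrow> y \<in> set (z # zs) \<Longrightarrow>
      g' x y = (if y = z then \<Sum>u\<in>insert z (set us). g x u else g x y)"
  shows "char_poly (kernel_mat (us @ z # zs) (us @ z # zs) g) =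
    [:-1, 1:] ^ length us * char_poly (kernel_mat (z # zs) (z # zs) g')"
proof -
  define ys where "ys = z # zs"
  define N where "N = kernel_mat us ys (\<lambda>_ y. if z = y then 1 else 0 :: 'b)"
  have z: "z \<notin> set us" "z \<notin> set zs" and dist: "distinct us" "distinct zs"
    using distinct by auto
  have pick_z: "(\<Sum>y\<leftarrow>ys. (if z = y then 1 else 0) * h y) = h z" for h :: "'a \<Rightarrow> 'b"
    using z dist sum_list_delta_mult[of ys z 1 h] by (simp add: ys_def)
  have "kernel_mat us us g = kernel_mat us us (\<lambda>x y. if x = y then 1 else 0)"
    using twin_block by (intro kernel_mat_cong) auto
  then have blocks: "kernel_mat (us @ ys) (us @ ys) g =
      four_block_mat (1\<^sub>m (length us)) (kernel_mat us ys g) (kernel_mat ys us g) (kernel_mat ys ys g)"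
    by (simp add: kernel_mat_append kernel_mat_delta dist)
  have "N * kernel_mat ys us g = kernel_mat us us (\<lambda>_ u. g z u)"
    by (simp add: N_def kernel_mat_mult pick_z)
  also have "\<dots> = kernel_mat us us (\<lambda>_ _. 0)"
    using twin_block z by (intro kernel_mat_cong) auto
  also have "\<dots> = 0\<^sub>m (length us) (length us)"
    by (rule kernel_mat_zero)
  finally have NS: "N * kernel_mat ys us g = 0\<^sub>m (length us) (length us)" .
  have "N * kernel_mat ys ys g = kernel_mat us ys (\<lambda>_ y. g z y)"
    by (simp add: N_def kernel_mat_mult pick_z)
  also have "\<dots> = N + kernel_mat us ys g"
    unfolding N_def kernel_mat_add using twin_block twin_rows distinct
    by (intro kernel_mat_cong) (auto simp: ys_def)
  finally have ND: "N * kernel_mat ys ys g = N + kernel_mat us ys g" .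
  have "kernel_mat ys ys g + kernel_mat ys us g * N = kernel_mat ys ys g'"
    unfolding N_def kernel_mat_mult kernel_mat_add using z dist merged
    by (intro kernel_mat_cong) (auto simp: ys_def sum_list_distinct_conv_sum_set)
  moreover have "char_poly (kernel_mat (us @ ys) (us @ ys) g) =
      [:-1, 1:] ^ length us * char_poly (kernel_mat ys ys g + kernel_mat ys us g * N)"
    unfolding blocks by (rule char_poly_four_block_one_mat[OF _ _ _ _ NS ND, where m = "length ys"])
      (simp_all add: N_def)
  ultimately show ?thesis
    by (simp only: ys_def)
qed

section \<open>Normalized Laplacians\<close>

text \<open>The entries of \<open>Id - D\<^sup>-\<^sup>1 A\<close>; since \<open>A\<close> holds the negated codegrees, they are
  nonnegative.\<close>
definition laplacian_entry :: "'a set set \<Rightarrow> 'a \<Rightarrow> 'a \<Rightarrow> complex" where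
  "laplacian_entry H x y =
    (if x = y then 1 else of_nat (card {h\<in>H. x \<in> h \<and> y \<in> h}) / of_nat (hdeg H x))"

lemma norm_laplacian_eq_kernel_mat:
  "map_mat complex_of_real (norm_laplacian V H) = kernel_mat (vlist V) (vlist V) (laplacian_entry H)"
proof -
  let ?xs = "vlist V" and ?codeg = "\<lambda>x y. real (card {h\<in>H. x \<in> h \<and> y \<in> h})"
  have xs: "distinct ?xs" "length ?xs = card V"
    by (simp_all add: vlist_def)
  have "deg_inv_mat V H = kernel_mat ?xs ?xs (\<lambda>x y. if x = y then 1 / real (hdeg H x) else 0)"
    "adj_mat V H = kernel_mat ?xs ?xs (\<lambda>x y. if x = y then 0 else - ?codeg x y)"
    using xs by (auto simp: deg_inv_mat_def adj_mat_def nth_eq_iff_index_eq)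
  then have "deg_inv_mat V H * adj_mat V H =
      kernel_mat ?xs ?xs (\<lambda>x y. if x = y then 0 else - ?codeg x y / real (hdeg H x))"
    using xs by (auto simp: kernel_mat_mult sum_list_delta_mult intro!: kernel_mat_cong)
  then show ?thesis
    using xs by (auto simp: norm_laplacian_def laplacian_entry_def nth_eq_iff_index_eq)
qed

lemma hspectrum_kernel_mat:
  assumes "distinct xs" "set xs = V"
  shows "hspectrum V H = proots (char_poly (kernel_mat xs xs (laplacian_entry H)))"
proof -
  have "char_poly (kernel_mat (vlist V) (vlist V) g) = char_poly (kernel_mat xs xs g)"
    for g :: "'a \<Rightarrow> 'a \<Rightarrow> complex"
    by (rule char_poly_kernel_mat_perm) (use assms in \<open>auto simp: vlist_def\<close>)
  then show ?thesis
    by (simp add: hspectrum_def norm_laplacian_eq_kernel_mat)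
qed

lemma hspectrum_merge_twins:
  fixes C Z :: "'a::linorder set"
  assumes "finite C" "finite Z" "C \<inter> Z = {z}"
    and twin_block: "\<And>x y. x \<in> C \<Longrightarrow> y \<in> C \<Longrightarrow> laplacian_entry H x y = (if x = y then 1 else 0)"
    and twin_rows: "\<And>u y. u \<in> C \<Longrightarrow> y \<in> Z - {z} \<Longrightarrow> laplacian_entry H u y = laplacian_entry H z y"
    and merged: "\<And>x y. x \<in> Z \<Longrightarrow> y \<in> Z \<Longrightarrow> laplacian_entry H' x y =
      (if y = z then \<Sum>u\<in>C. laplacian_entry H x u else laplacian_entry H x y)"
  shows "hspectrum (C \<union> Z) H = hspectrum Z H' + replicate_mset (card C - 1) 1"
proof -
  define us zs where "us = vlist (C - {z})" and "zs = vlist (Z - {z})"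
  have z: "z \<in> C" "z \<in> Z"
    using assms(3) by auto
  have us: "distinct us" "insert z (set us) = C" "length us = card C - 1"
    and zs: "distinct zs" "set zs = Z - {z}"
    using assms(1-3) z by (auto simp: us_def zs_def vlist_def)
  have distinct: "distinct (us @ z # zs)" and Z: "distinct (z # zs)" "set (z # zs) = Z"
    using us zs assms(3) z by (auto simp: us_def vlist_def assms(1))
  have char_poly_nonzero: "char_poly (kernel_mat xs xs g) \<noteq> 0"
    for xs and g :: "'a \<Rightarrow> 'a \<Rightarrow> complex"
    using degree_monic_char_poly[OF kernel_mat_carrier, of xs g] by auto
  have twins: "char_poly (kernel_mat (us @ z # zs) (us @ z # zs) (laplacian_entry H)) =
      [:-1, 1:] ^ (card C - 1) * char_poly (kernel_mat (z # zs) (z # zs) (laplacian_entry H'))"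
    unfolding us(3)[symmetric] using twin_block twin_rows merged us zs Z
    by (intro char_poly_kernel_mat_twins[OF distinct]) auto
  have "hspectrum (C \<union> Z) H =
      proots (char_poly (kernel_mat (us @ z # zs) (us @ z # zs) (laplacian_entry H)))"
    using distinct us zs z by (intro hspectrum_kernel_mat) auto
  also have "\<dots> =
      proots ([:-1, 1:] ^ (card C - 1) * char_poly (kernel_mat (z # zs) (z # zs) (laplacian_entry H')))"
    unfolding twins ..
  also have "\<dots> = replicate_mset (card C - 1) 1 + hspectrum Z H'"
    using char_poly_nonzero by (simp add: proots_mult proots_power hspectrum_kernel_mat[OF Z])
  finally show ?thesis
    by (simp add: add.commute)
qed

section \<open>Hyperflowers\<close>

locale flower =
  fixes V :: "'a set" and H :: "'a set set" and l r :: nat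
    and v :: "nat \<Rightarrow> 'a" and hs :: "nat \<Rightarrow> 'a set"
  assumes hyperflower: "hyperflower V H l r v hs" and peripheral_nonempty: "1 \<le> l"
begin

definition petal_vertices :: "'a set" where
  "petal_vertices = (\<Union>i\<in>{1..r}. hs i)"

definition incidence :: "'a \<Rightarrow> (nat \<times> nat) set" where
  "incidence x = {(i, j) \<in> {1..r} \<times> {1..l}. x \<in> hs i \<union> {v j}}"

lemma inj_peripheral: "inj_on v {1..l}"
  using hyperflower by (simp add: hyperflower_def)

lemma peripheral_notin_petal: "i \<in> {1..r} \<Longrightarrow> a \<in> {1..l} \<Longrightarrow> v a \<notin> hs i"
  using hyperflower unfolding hyperflower_def by blast

lemma petals_disjoint: "i \<in> {1..r} \<Longrightarrow> k \<in> {1..r} \<Longrightarrow> x \<in> hs i \<Longrightarrow> x \<in> hs k \<Longrightarrow> i = k"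
  using hyperflower unfolding hyperflower_def by blast

lemma card_peripheral: "card (v ` {1..l}) = l"
  using inj_peripheral by (simp add: card_image)

lemma vertices_eq: "V = v ` {1..l} \<union> petal_vertices"
  using hyperflower by (simp add: hyperflower_def petal_vertices_def)

lemma hyperedges_eq: "H = (\<lambda>(i, j). hs i \<union> {v j}) ` ({1..r} \<times> {1..l})"
  using hyperflower unfolding hyperflower_def by fast

lemma finite_vertices: "finite V"
  using hyperflower unfolding hyperflower_def hypergraph_def by blast

lemma peripheral_notin_petal_vertices: "a \<in> {1..l} \<Longrightarrow> v a \<notin> petal_vertices"
  using peripheral_notin_petal by (auto simp: petal_vertices_def)

lemma petals_nonempty: "1 \<le> r"
proof (rule ccontr)
  assume "\<not> 1 \<le> r"
  then have "H = {}"
    by (simp add: hyperedges_eq)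
  moreover have "v 1 \<in> V"
    using peripheral_nonempty by (simp add: vertices_eq)
  ultimately show False
    using hyperflower by (auto simp: hyperflower_def hypergraph_def)
qed

lemma inj_on_hyperedges: "inj_on (\<lambda>(i, j). hs i \<union> {v j}) ({1..r} \<times> {1..l})"
proof (rule inj_onI, clarify)
  fix i j i' j'
  assume ij: "i \<in> {1..r}" "j \<in> {1..l}" "i' \<in> {1..r}" "j' \<in> {1..l}"
    and eq: "hs i \<union> {v j} = hs i' \<union> {v j'}"
  then have "v j = v j'"
    using peripheral_notin_petal by blast
  then have "j = j'"
    using inj_peripheral ij by (auto dest: inj_onD)
  then have "hs i = hs i'"
    using eq ij peripheral_notin_petal by blast
  then show "i = i' \<and> j = j'"
    using \<open>j = j'\<close> ij hyperflower petals_disjoint unfolding hyperflower_def by blast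
qed

lemma card_hyperedges_containing:
  "card {h\<in>H. x \<in> h \<and> y \<in> h} = card (incidence x \<inter> incidence y)"
proof -
  have "{h\<in>H. x \<in> h \<and> y \<in> h} = (\<lambda>(i, j). hs i \<union> {v j}) ` (incidence x \<inter> incidence y)"
    by (auto simp: hyperedges_eq incidence_def)
  moreover have "inj_on (\<lambda>(i, j). hs i \<union> {v j}) (incidence x \<inter> incidence y)"
    by (rule inj_on_subset[OF inj_on_hyperedges]) (auto simp: incidence_def)
  ultimately show ?thesis
    by (simp add: card_image)
qed

lemma hdeg_eq_card_incidence: "hdeg H x = card (incidence x)"
  using card_hyperedges_containing[of x x] by (simp add: hdeg_def)

lemma incidence_peripheral:
  assumes a: "a \<in> {1..l}"
  shows "incidence (v a) = {1..r} \<times> {a}"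
proof -
  have "v a \<in> hs i \<union> {v j} \<longleftrightarrow> j = a" if "i \<in> {1..r}" "j \<in> {1..l}" for i j
    using peripheral_notin_petal[OF that(1) a] inj_on_eq_iff[OF inj_peripheral that(2) a] by auto
  then show ?thesis
    using a by (auto simp: incidence_def)
qed

lemma incidence_petal:
  assumes p: "p \<in> {1..r}" "w \<in> hs p"
  shows "incidence w = {p} \<times> {1..l}"
proof -
  have "w \<in> hs i \<union> {v j} \<longleftrightarrow> i = p" if "i \<in> {1..r}" "j \<in> {1..l}" for i j
    using petals_disjoint[OF that(1) p(1) _ p(2)] peripheral_notin_petal[OF p(1) that(2)] p(2) by auto
  then show ?thesis
    using p by (auto simp: incidence_def)
qed

lemma laplacian_entry_peripheral:
  assumes "x \<in> v ` {1..l}" "y \<in> v ` {1..l}"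
  shows "laplacian_entry H x y = (if x = y then 1 else 0)"
  using assms inj_on_eq_iff[OF inj_peripheral]
  by (auto simp: laplacian_entry_def card_hyperedges_containing incidence_peripheral)

lemma laplacian_entry_peripheral_petal:
  assumes "x \<in> v ` {1..l}" "w \<in> petal_vertices"
  shows "laplacian_entry H x w = 1 / of_nat r"
proof -
  obtain p where p: "p \<in> {1..r}" "w \<in> hs p"
    using assms(2) by (auto simp: petal_vertices_def)
  then have "x \<noteq> w"
    using peripheral_notin_petal assms(1) by blast
  then show ?thesis
    using assms(1) p by (auto simp: laplacian_entry_def card_hyperedges_containing hdeg_eq_card_incidence
        incidence_peripheral incidence_petal Times_Int_Times)
qed

lemma laplacian_entry_petal_peripheral:
  assumes "w \<in> petal_vertices" "x \<in> v ` {1..l}"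
  shows "laplacian_entry H w x = 1 / of_nat l"
proof -
  obtain p where p: "p \<in> {1..r}" "w \<in> hs p"
    using assms(1) by (auto simp: petal_vertices_def)
  then have "w \<noteq> x"
    using peripheral_notin_petal assms(2) by blast
  then show ?thesis
    using assms(2) p by (auto simp: laplacian_entry_def card_hyperedges_containing hdeg_eq_card_incidence
        incidence_peripheral incidence_petal Times_Int_Times)
qed

lemma laplacian_entry_petal:
  assumes "p \<in> {1..r}" "w \<in> hs p" "q \<in> {1..r}" "w' \<in> hs q"
  shows "laplacian_entry H w w' = (if p = q then 1 else 0)"
  using assms petals_disjoint[OF assms(1,3) assms(2)] peripheral_nonempty
  by (auto simp: laplacian_entry_def card_hyperedges_containing hdeg_eq_card_incidence incidence_petal)

lemma sum_laplacian_entry_peripheral: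
  assumes "x \<in> V"
  shows "(\<Sum>u\<in>v ` {1..l}. laplacian_entry H x u) = 1"
proof (cases "x \<in> v ` {1..l}")
  case True
  then show ?thesis
    by (simp add: laplacian_entry_peripheral if_distrib cong: sum.cong)
next
  case False
  then have "x \<in> petal_vertices"
    using assms by (simp add: vertices_eq)
  then have "(\<Sum>u\<in>v ` {1..l}. laplacian_entry H x u) = of_nat (card (v ` {1..l})) * (1 / of_nat l)"
    by (simp add: laplacian_entry_petal_peripheral)
  then show ?thesis
    using peripheral_nonempty card_peripheral by simp
qed

definition reduced_vertices :: "'a set" where
  "reduced_vertices = V - v ` {2..l}"

definition reduced_hyperedges :: "'a set set" where
  "reduced_hyperedges = {h\<in>H. \<forall>j\<in>{2..l}. v j \<notin> h}"

lemma peripheral_eq_insert: "v ` {1..l} = insert (v 1) (v ` {2..l})"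
proof -
  have "{1..l} = insert 1 {2..l}"
    using peripheral_nonempty by auto
  then show ?thesis
    by simp
qed

lemma first_peripheral_notin: "v 1 \<notin> v ` {2..l}"
  using inj_on_eq_iff[OF inj_peripheral] by fastforce

lemma reduced_vertices_eq: "reduced_vertices = insert (v 1) petal_vertices"
  unfolding reduced_vertices_def
  unfolding vertices_eq peripheral_eq_insert
  using peripheral_notin_petal_vertices peripheral_eq_insert first_peripheral_notin by auto

lemma reduced_hyperedges_eq: "reduced_hyperedges = (\<lambda>i. hs i \<union> {v 1}) ` {1..r}"
proof -
  have avoids: "(\<forall>j'\<in>{2..l}. v j' \<notin> hs i \<union> {v j}) \<longleftrightarrow> j = 1" if "i \<in> {1..r}" "j \<in> {1..l}" for i j
    using that peripheral_notin_petal[OF that(1)] inj_on_eq_iff[OF inj_peripheral] by fastforce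
  show ?thesis
  proof (intro equalityI subsetI)
    fix h
    assume "h \<in> reduced_hyperedges"
    then have "h \<in> H" and h: "\<forall>j'\<in>{2..l}. v j' \<notin> h"
      by (simp_all add: reduced_hyperedges_def)
    then obtain i j where ij: "i \<in> {1..r}" "j \<in> {1..l}" "h = hs i \<union> {v j}"
      unfolding hyperedges_eq by blast
    then have "j = 1"
      using avoids h by blast
    then show "h \<in> (\<lambda>i. hs i \<union> {v 1}) ` {1..r}"
      using ij by blast
  next
    fix h
    assume "h \<in> (\<lambda>i. hs i \<union> {v 1}) ` {1..r}"
    then obtain i where i: "i \<in> {1..r}" "h = hs i \<union> {v 1}"
      by blast
    then have "h \<in> H"
      unfolding hyperedges_eq using peripheral_nonempty by (auto intro!: image_eqI[of _ _ "(i, 1)"])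
    moreover have "\<forall>j'\<in>{2..l}. v j' \<notin> h"
      using avoids[OF i(1), of 1] i peripheral_nonempty by simp
    ultimately show "h \<in> reduced_hyperedges"
      by (simp add: reduced_hyperedges_def)
  qed
qed

lemma hyperflower_reduced: "hyperflower reduced_vertices reduced_hyperedges 1 r v hs"
proof -
  have petals: "\<forall>i\<in>{1..r}. hs i \<noteq> {}" "\<forall>i\<in>{1..r}. \<forall>k\<in>{1..r}. i \<noteq> k \<longrightarrow> hs i \<inter> hs k = {}"
    using hyperflower by (simp_all add: hyperflower_def)
  have "hypergraph reduced_vertices reduced_hyperedges"
    unfolding hypergraph_def reduced_vertices_eq reduced_hyperedges_eq
    using finite_vertices petals_nonempty
    by (auto simp: vertices_eq petal_vertices_def)
  then show ?thesis
    using petals peripheral_notin_petal peripheral_nonempty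
    by (auto simp: hyperflower_def reduced_vertices_eq reduced_hyperedges_eq petal_vertices_def)
qed

lemma laplacian_entry_reduced:
  assumes x: "x \<in> reduced_vertices" and y: "y \<in> reduced_vertices"
  shows "laplacian_entry reduced_hyperedges x y =
    (if y = v 1 then \<Sum>u\<in>v ` {1..l}. laplacian_entry H x u else laplacian_entry H x y)"
proof -
  interpret reduced: flower reduced_vertices reduced_hyperedges 1 r v hs
    using hyperflower_reduced by unfold_locales auto
  have reduced_petals: "reduced.petal_vertices = petal_vertices"
    unfolding reduced.petal_vertices_def petal_vertices_def ..
  show ?thesis
  proof (cases "y = v 1")
    case True
    have "laplacian_entry reduced_hyperedges x y = (\<Sum>u\<in>v ` {1..1}. laplacian_entry reduced_hyperedges x u)"
      using True by simp
    also have "\<dots> = 1"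
      by (rule reduced.sum_laplacian_entry_peripheral[OF x])
    also have "\<dots> = (\<Sum>u\<in>v ` {1..l}. laplacian_entry H x u)"
      using x sum_laplacian_entry_peripheral by (simp add: reduced_vertices_def)
    finally show ?thesis
      using True by simp
  next
    case False
    then have y': "y \<in> petal_vertices"
      using y by (simp add: reduced_vertices_eq)
    consider "x = v 1" | "x \<in> petal_vertices"
      using x by (auto simp: reduced_vertices_eq)
    then show ?thesis
    proof cases
      case 1
      then have "laplacian_entry H x y = 1 / of_nat r"
        using y' peripheral_nonempty by (intro laplacian_entry_peripheral_petal) auto
      moreover have "laplacian_entry reduced_hyperedges x y = 1 / of_nat r"
        using 1 y' reduced_petals by (intro reduced.laplacian_entry_peripheral_petal) auto
      ultimately show ?thesis
        using False by simp
    next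
      case 2
      obtain p q where pq: "p \<in> {1..r}" "x \<in> hs p" "q \<in> {1..r}" "y \<in> hs q"
        using 2 y' by (auto simp: petal_vertices_def)
      show ?thesis
        using False laplacian_entry_petal[OF pq] reduced.laplacian_entry_petal[OF pq] by simp
    qed
  qed
qed

end

theorem mainTheorem6:
  fixes V :: "'a::linorder set" and H :: "'a set set" and l r :: nat
    and v :: "nat \<Rightarrow> 'a" and hs :: "nat \<Rightarrow> 'a set"
  assumes "hyperflower V H l r v hs" and "l \<ge> 1"
  shows "hspectrum V H =
           hspectrum (V - v ` {2..l}) {h\<in>H. \<forall>j\<in>{2..l}. v j \<notin> h} + replicate_mset (l - 1) 1"
proof -
  interpret flower V H l r v hs
    using assms by unfold_locales
  have "hspectrum (v ` {1..l} \<union> reduced_vertices) H =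
      hspectrum reduced_vertices reduced_hyperedges + replicate_mset (card (v ` {1..l}) - 1) 1"
  proof (rule hspectrum_merge_twins)
    show "finite reduced_vertices"
      using finite_vertices by (simp add: reduced_vertices_def)
    show "v ` {1..l} \<inter> reduced_vertices = {v 1}"
      using peripheral_notin_petal_vertices peripheral_nonempty by (auto simp: reduced_vertices_eq)
    show "laplacian_entry H u y = laplacian_entry H (v 1) y"
      if "u \<in> v ` {1..l}" "y \<in> reduced_vertices - {v 1}" for u y
      using that peripheral_nonempty by (simp add: reduced_vertices_eq laplacian_entry_peripheral_petal)
  qed (simp_all add: laplacian_entry_peripheral laplacian_entry_reduced)
  moreover have "v ` {1..l} \<union> reduced_vertices = V"
    unfolding reduced_vertices_def using vertices_eq by auto
  ultimately show ?thesis
    using card_peripheral by (simp add: reduced_vertices_def reduced_hyperedges_def)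
qed

end
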